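(* For $i\in\{1,\dots,5\}$ and any $i$-regular triple $(a,b,c)$ of elements of $\alpha$, the nanoword $w^i_{a,b,c}$ satisfies $\|w^i_{a,b,c}\|=3$.
   Context: Fix a set $\alpha$ with an involution $\tau$. An $\alpha$-alphabet is a set $\mathcal A$ with a map $A\mapsto|A|\in\alpha$. A nanoword over $\alpha$ is a pair $(\mathcal A,w)$ with $\mathcal A$ a finite $\alpha$-alphabet and $w$ a word in which each letter occurs exactly twice; its length is the length of $w$. Isomorphism: bijection of alphabets preserving $|\cdot|$ carrying one word to the other letterwise. Homotopy moves ($x,y,z,t$ words in the remaining letters): (1) $(\mathcal A,xAAy)\mapsto(\mathcal A\setminus\{A\},xy)$; (2) $(\mathcal A,xAByBAz)\mapsto(\mathcal A\setminus\{A,B\},xyz)$ if $|B|=\tau(|A|)$; (3) $(\mathcal A,xAByACzBCt)\mapsto(\mathcal A,xBAyCAzCBt)$ if $A,B,C$ distinct with $|A|=|B|=|C|$. Homotopy is generated by isomorphisms, these moves and inverses. For a nanoword $w$, $\|w\|$ is half the minimal length of a nanoword homotopic to $w$. For $a,b,c\in\alpha$, with $\mathcal A=\{A,B,C\}$, $|A|=a,|B|=b,|C|=c$: $w^1_{a,b,c}=ABCABC$, $w^2_{a,b,c}=ABCACB$, $w^3_{a,b,c}=ABCBAC$, $w^4_{a,b,c}=ABCBCA$, $w^5_{a,b,c}=ABACBC$. The triple is 1-regular if $a\neq\tau(b)\neq c$; 2-regular if $c\neq\tau(b)$; 3-regular if $a\neq\tau(b)$; 4-regular if $c\neq\tau(b)$;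 5-regular unless $a=b=c=\tau(a)$. *)

theory Defs
  imports Main
begin

text \<open>Letters are natural numbers; a nanoword is a pair (lab, w) where w is a word
 and the alphabet is set w, with lab giving the projection |.| on letters.
 (Values of lab outside set w are irrelevant.)\<close>

type_synonym 'a nanoword = "(nat \<Rightarrow> 'a) \<times> nat list"

definition nanoword :: "'a nanoword \<Rightarrow> bool" where
  "nanoword u \<longleftrightarrow> (\<forall>x\<in>set (snd u). count_list (snd u) x = 2)"

definition nw_iso :: "'a nanoword \<Rightarrow> 'a nanoword \<Rightarrow> bool" where
  "nw_iso u v \<longleftrightarrow> (\<exists>f. inj_on f (set (snd u)) \<and> map f (snd u) = snd v \<and>
      (\<forall>x\<in>set (snd u). fst v (f x) = fst u x))"

definition nw_move :: "('a \<Rightarrow> 'a) \<Rightarrow> 'a nanoword \<Rightarrow> 'a nanoword \<Rightarrow> bool" where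
  "nw_move \<tau> u v \<longleftrightarrow> fst u = fst v \<and>
    ((\<exists>x y A. snd u = x @ [A, A] @ y \<and> snd v = x @ y)
   \<or> (\<exists>x y z A B. snd u = x @ [A, B] @ y @ [B, A] @ z \<and> snd v = x @ y @ z
          \<and> fst u B = \<tau> (fst u A))
   \<or> (\<exists>x y z t A B C. A \<noteq> B \<and> B \<noteq> C \<and> A \<noteq> C
          \<and> fst u A = fst u B \<and> fst u B = fst u C
          \<and> snd u = x @ [A, B] @ y @ [A, C] @ z @ [B, C] @ t
          \<and> snd v = x @ [B, A] @ y @ [C, A] @ z @ [C, B] @ t))"

definition nw_hstep :: "('a \<Rightarrow> 'a) \<Rightarrow> 'a nanoword \<Rightarrow> 'a nanoword \<Rightarrow> bool" where
  "nw_hstep \<tau> u v \<longleftrightarrow> nanoword u \<and> nanoword v \<and>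
     (nw_iso u v \<or> nw_move \<tau> u v \<or> nw_move \<tau> v u)"

definition homotopic :: "('a \<Rightarrow> 'a) \<Rightarrow> 'a nanoword \<Rightarrow> 'a nanoword \<Rightarrow> bool" where
  "homotopic \<tau> u v \<longleftrightarrow> nanoword u \<and> (nw_hstep \<tau>)\<^sup>*\<^sup>* u v"

definition nw_norm :: "('a \<Rightarrow> 'a) \<Rightarrow> 'a nanoword \<Rightarrow> nat" where
  "nw_norm \<tau> u = (LEAST n. \<exists>v. homotopic \<tau> u v \<and> length (snd v) = n) div 2"

definition lab3 :: "'a \<Rightarrow> 'a \<Rightarrow> 'a \<Rightarrow> nat \<Rightarrow> 'a" where
  "lab3 a b c = (\<lambda>x. if x = 0 then a else if x = 1 then b else c)"

text \<open>Letters A = 0, B = 1, C = 2.\<close>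
definition wabc :: "nat \<Rightarrow> 'a \<Rightarrow> 'a \<Rightarrow> 'a \<Rightarrow> 'a nanoword" where
  "wabc i a b c = (lab3 a b c,
     (if i = 1 then [0,1,2,0,1,2]
      else if i = 2 then [0,1,2,0,2,1]
      else if i = 3 then [0,1,2,1,0,2]
      else if i = 4 then [0,1,2,1,2,0]
      else [0,1,0,2,1,2]))"

definition regular :: "('a \<Rightarrow> 'a) \<Rightarrow> nat \<Rightarrow> 'a \<Rightarrow> 'a \<Rightarrow> 'a \<Rightarrow> bool" where
  "regular \<tau> i a b c \<longleftrightarrow>
     (if i = 1 then a \<noteq> \<tau> b \<and> \<tau> b \<noteq> c
      else if i = 2 then c \<noteq> \<tau> b
      else if i = 3 then a \<noteq> \<tau> b
      else if i = 4 then c \<noteq> \<tau> b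
      else \<not> (a = b \<and> b = c \<and> a = \<tau> a))"

end

theory Submission
  imports Defs "HOL-Library.Numeral_Type" "HOL-Library.Function_Algebras"
begin

text \<open>
  Each \<open>w\<^sup>i\<^sub>a\<^sub>,\<^sub>b\<^sub>,\<^sub>c\<close> has length 6, so it suffices to show that no nanoword of length at
  most 4 is homotopic to it; we separate them by invariants. Fix an odd map \<open>\<phi>\<close>
  (\<open>\<phi> (\<tau> x) = - \<phi> x\<close>) into a commutative ring. For letters \<open>X \<noteq> Y\<close> let \<open>\<epsilon>(X, Y)\<close> be \<open>1\<close>
  if they occur in the order \<open>XYXY\<close>, \<open>-1\<close> for \<open>YXYX\<close> and \<open>0\<close> otherwise, and call
  \<open>n(X) = \<Sum>\<^sub>Y \<epsilon>(X, Y) \<phi> |Y|\<close> the link weight of \<open>X\<close>. The invariant sums \<open>g |X| n(X)\<close> over the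
  letters and \<open>H s |X| |Y| n(X) n(Y)\<close> over the ordered pairs of letters, where \<open>s\<close> records
  whether the pair is linked, disjoint or nested; a few vanishing, oddness and three-term
  conditions on \<open>g\<close> and \<open>H\<close> make it invariant under the three moves. The nanowords of length
  below 6 are the empty word, \<open>AA\<close>, \<open>AABB\<close>, \<open>ABBA\<close> and \<open>ABAB\<close>, and the invariant vanishes on all
  of them once it vanishes on the linked pairs \<open>ABAB\<close>. For each regular triple we exhibit such
  \<open>\<phi>, g, H\<close> with values in \<open>\<alpha> \<Rightarrow> \<int>/6\<close> that do not vanish on \<open>w\<^sup>i\<^sub>a\<^sub>,\<^sub>b\<^sub>,\<^sub>c\<close>.
\<close>

section \<open>Pairs of letters in a Gauss word\<close>

datatype shape = Linked | Disjoint | Nested | Other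

definition pair_subword :: "nat list \<Rightarrow> nat \<Rightarrow> nat \<Rightarrow> nat list" where
  "pair_subword w X Y = filter (\<lambda>Z. Z = X \<or> Z = Y) w"

text \<open>Each unordered pair is recorded once, with its first-occurring letter first; the reversed
  pair gets the shape \<^const>\<open>Other\<close>.\<close>

definition pair_shape :: "nat list \<Rightarrow> nat \<Rightarrow> nat \<Rightarrow> shape" where
  "pair_shape w X Y =
     (if X = Y then Other
      else if pair_subword w X Y = [X, Y, X, Y] then Linked
      else if pair_subword w X Y = [X, X, Y, Y] then Disjoint
      else if pair_subword w X Y = [X, Y, Y, X] then Nested
      else Other)"

definition link_sign :: "nat list \<Rightarrow> nat \<Rightarrow> nat \<Rightarrow> 'r::comm_ring_1" where
  "link_sign w X Y =
     (if X = Y then 0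
      else if pair_subword w X Y = [X, Y, X, Y] then 1
      else if pair_subword w X Y = [Y, X, Y, X] then -1
      else 0)"

lemma pair_shape_self [simp]: "pair_shape w X X = Other"
  by (simp add: pair_shape_def)

lemma link_sign_self [simp]: "link_sign w X X = 0"
  by (simp add: link_sign_def)

lemma pair_subword_commute: "pair_subword w Y X = pair_subword w X Y"
  unfolding pair_subword_def by (auto intro: filter_cong)

lemma pair_data_cong:
  assumes "pair_subword w X Y = pair_subword w' X Y"
  shows "pair_shape w X Y = pair_shape w' X Y" and "link_sign w X Y = link_sign w' X Y"
  using assms by (simp_all add: pair_shape_def link_sign_def)

lemma pair_subword_removeAll:
  assumes "X \<noteq> A" "Y \<noteq> A"
  shows "pair_subword (removeAll A w) X Y = pair_subword w X Y"
  using assms by (induction w) (auto simp: pair_subword_def)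

lemma pair_data_removeAll:
  assumes "X \<noteq> A" "Y \<noteq> A"
  shows "pair_shape (removeAll A w) X Y = pair_shape w X Y"
    and "link_sign (removeAll A w) X Y = link_sign w X Y"
  using pair_data_cong[OF pair_subword_removeAll[OF assms]] by simp_all

lemma pair_data_map:
  assumes inj: "inj_on f (set w)" and XY: "X \<in> set w" "Y \<in> set w"
  shows "pair_shape (map f w) (f X) (f Y) = pair_shape w X Y"
    and "link_sign (map f w) (f X) (f Y) = link_sign w X Y"
proof -
  have "filter (\<lambda>Z. f Z = f X \<or> f Z = f Y) w = filter (\<lambda>Z. Z = X \<or> Z = Y) w"
    using inj XY by (intro filter_cong) (auto dest: inj_onD)
  then have sub: "pair_subword (map f w) (f X) (f Y) = map f (pair_subword w X Y)"
    by (simp add: pair_subword_def filter_map comp_def)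
  have map_eq: "map f (pair_subword w X Y) = map f l \<longleftrightarrow> pair_subword w X Y = l"
    if "set l \<subseteq> set w" for l
    using that inj by (intro inj_on_map_eq_map) (auto simp: pair_subword_def intro: inj_on_subset)
  have f_eq: "f X = f Y \<longleftrightarrow> X = Y"
    using inj XY by (auto dest: inj_onD)
  show "pair_shape (map f w) (f X) (f Y) = pair_shape w X Y"
    using map_eq[of "[X, Y, X, Y]"] map_eq[of "[X, X, Y, Y]"] map_eq[of "[X, Y, Y, X]"] XY
    by (simp add: pair_shape_def sub f_eq)
  show "link_sign (map f w) (f X) (f Y) = link_sign w X Y"
    using map_eq[of "[X, Y, X, Y]"] map_eq[of "[Y, X, Y, X]"] XY
    by (simp add: link_sign_def sub f_eq)
qed

lemma pair_data_adjacent: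
  assumes "pair_subword w X A = u @ [A, A] @ v"
  shows "link_sign w X A = 0" and "link_sign w A X = 0"
    and "pair_shape w X A \<noteq> Linked" and "pair_shape w A X \<noteq> Linked" "pair_shape w A X \<noteq> Nested"
proof -
  have "X \<noteq> A \<Longrightarrow> pair_subword w X A \<noteq> l"
    if "l \<in> {[X, A, X, A], [A, X, A, X], [A, X, X, A]}" for l
    using that unfolding assms
    by (cases u; cases v) (auto simp: Cons_eq_append_conv append_eq_Cons_conv)
  then show "link_sign w X A = 0" "link_sign w A X = 0"
    "pair_shape w X A \<noteq> Linked" "pair_shape w A X \<noteq> Linked" "pair_shape w A X \<noteq> Nested"
    by (simp_all add: link_sign_def pair_shape_def pair_subword_commute[of w A X])
qed

lemma filter_pair_notin:
  assumes "P \<notin> set u"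
  shows "filter (\<lambda>Z. Z = P \<or> Z = D) u = replicate (count_list u D) D"
  using assms by (induction u) auto

text \<open>Deleting \<open>B\<close>, resp. \<open>A\<close>, leaves \<open>x A y A z\<close>, resp. \<open>x B y B z\<close>; these differ by a renaming,
  so every other letter sees \<open>A\<close> and \<open>B\<close> alike.\<close>

lemma pair_data_move2:
  assumes AB: "A \<noteq> B" "A \<notin> set (x @ y @ z)" "B \<notin> set (x @ y @ z)"
    and X: "X \<in> set (x @ y @ z)"
  defines "w \<equiv> x @ [A, B] @ y @ [B, A] @ z"
  shows "pair_shape w X B = pair_shape w X A" and "link_sign w X B = link_sign w X A"
    and "pair_shape w B X = pair_shape w A X" and "link_sign w B X = link_sign w A X"
proof -
  define w0 where "w0 = x @ [A] @ y @ [A] @ z"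
  define ren where "ren Z = (if Z = A then B else Z)" for Z
  have ren_id: "map ren u = u" if "A \<notin> set u" for u
    using that by (induction u) (auto simp: ren_def)
  have "removeAll A w = map ren w0"
    using AB by (simp add: w_def w0_def ren_id) (simp add: ren_def)
  then have sub_B: "pair_subword w P Q = pair_subword (map ren w0) P Q" if "P \<noteq> A" "Q \<noteq> A" for P Q
    using pair_subword_removeAll[OF that, of w] by simp
  have "removeAll B w = w0"
    using AB by (simp add: w_def w0_def)
  then have sub_A: "pair_subword w P Q = pair_subword w0 P Q" if "P \<noteq> B" "Q \<noteq> B" for P Q
    using pair_subword_removeAll[OF that, of w] by simp
  have inj: "inj_on ren (set w0)"
    using AB by (auto simp: inj_on_def ren_def w0_def)
  have mem: "X \<in> set w0" "A \<in> set w0" and XAB: "X \<noteq> A" "X \<noteq> B"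
    using X AB by (auto simp: w0_def)
  have ren: "ren X = X" "ren A = B"
    using XAB by (simp_all add: ren_def)
  show "pair_shape w X B = pair_shape w X A" "link_sign w X B = link_sign w X A"
    "pair_shape w B X = pair_shape w A X" "link_sign w B X = link_sign w A X"
    using XAB AB
    by (simp_all add: pair_data_cong[OF sub_B] pair_data_cong[OF sub_A]
        pair_data_map[OF inj mem, unfolded ren] pair_data_map[OF inj mem(2,1), unfolded ren])
qed

lemma link_sign_counts:
  fixes cu cv cs :: nat
  assumes "P \<noteq> D" "cu + cv + cs = 2"
    and "pair_subword w P D = replicate cu D @ [P] @ replicate cv D @ [P] @ replicate cs D"
  shows "link_sign w P D = (of_nat cv * (of_nat cs - of_nat cu) :: 'r::comm_ring_1)"
proof -
  have "cu \<le> 2" "cv \<le> 2" "cs \<le> 2"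
    using assms(2) by auto
  then consider "cu = 0" "cv = 0" "cs = 2" | "cu = 0" "cv = 1" "cs = 1" | "cu = 0" "cv = 2" "cs = 0"
    | "cu = 1" "cv = 0" "cs = 1" | "cu = 1" "cv = 1" "cs = 0" | "cu = 2" "cv = 0" "cs = 0"
    using assms(2) by (auto simp: le_Suc_eq numeral_2_eq_2)
  then show ?thesis
    by cases (use assms(1,3) in \<open>simp_all add: link_sign_def numeral_2_eq_2\<close>)
qed

lemma link_sign_move3:
  assumes ABC: "distinct [A, B, C]"
      "A \<notin> set (x @ y @ z @ t)" "B \<notin> set (x @ y @ z @ t)" "C \<notin> set (x @ y @ z @ t)"
    and D: "D \<notin> {A, B, C}" "count_list (x @ y @ z @ t) D = 2"
  defines "w \<equiv> x @ [A, B] @ y @ [A, C] @ z @ [B, C] @ t"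
  shows "link_sign w B D = link_sign w A D + (link_sign w C D :: 'r::comm_ring_1)"
proof -
  define cx cy cz ct where "cx = count_list x D" and "cy = count_list y D"
    and "cz = count_list z D" and "ct = count_list t D"
  have count: "cx + cy + (cz + ct) = 2" "cx + (cy + cz) + ct = 2" "(cx + cy) + cz + ct = 2"
    using D(2) by (simp_all add: cx_def cy_def cz_def ct_def)
  have sub: "pair_subword w A D = replicate cx D @ [A] @ replicate cy D @ [A] @ replicate (cz + ct) D"
    "pair_subword w B D = replicate cx D @ [B] @ replicate (cy + cz) D @ [B] @ replicate ct D"
    "pair_subword w C D = replicate (cx + cy) D @ [C] @ replicate cz D @ [C] @ replicate ct D"
    using ABC D(1) by (auto simp: w_def pair_subword_def filter_pair_notin replicate_add
        cx_def cy_def cz_def ct_def)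
  have neq: "A \<noteq> D" "B \<noteq> D" "C \<noteq> D"
    using D(1) by auto
  have sign_A: "link_sign w A D = (of_nat cy * (of_nat (cz + ct) - of_nat cx) :: 'r)"
    by (rule link_sign_counts[OF neq(1) count(1) sub(1)])
  have sign_B: "link_sign w B D = (of_nat (cy + cz) * (of_nat ct - of_nat cx) :: 'r)"
    by (rule link_sign_counts[OF neq(2) count(2) sub(2)])
  have sign_C: "link_sign w C D = (of_nat cz * (of_nat ct - of_nat (cx + cy)) :: 'r)"
    by (rule link_sign_counts[OF neq(3) count(3) sub(3)])
  show ?thesis
    unfolding sign_A sign_B sign_C by (simp add: algebra_simps)
qed

lemma pair_subword_move3:
  assumes "X \<notin> {A, B, C} \<or> Y \<notin> {A, B, C}"
  shows "pair_subword (x @ [A, B] @ y @ [A, C] @ z @ [B, C] @ t) X Y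
       = pair_subword (x @ [B, A] @ y @ [C, A] @ z @ [C, B] @ t) X Y"
proof -
  have "pair_subword (x @ [A, B] @ y @ [A, C] @ z @ [B, C] @ t) P Q
      = pair_subword (x @ [B, A] @ y @ [C, A] @ z @ [C, B] @ t) P Q" if "P \<notin> {A, B, C}" for P Q
    using that by (cases "Q = A"; cases "Q = B"; cases "Q = C") (auto simp: pair_subword_def)
  then show ?thesis
    using assms pair_subword_commute by metis
qed

lemma pair_subwords_move3:
  assumes "distinct [A, B, C]" "A \<notin> set (x @ y @ z @ t)" "B \<notin> set (x @ y @ z @ t)"
    "C \<notin> set (x @ y @ z @ t)"
  defines "w \<equiv> x @ [A, B] @ y @ [A, C] @ z @ [B, C] @ t"
    and "w' \<equiv> x @ [B, A] @ y @ [C, A] @ z @ [C, B] @ t"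
  shows "pair_subword w A B = [A, B, A, B]" "pair_subword w B A = [A, B, A, B]"
    "pair_subword w A C = [A, A, C, C]" "pair_subword w C A = [A, A, C, C]"
    "pair_subword w B C = [B, C, B, C]" "pair_subword w C B = [B, C, B, C]"
    "pair_subword w' A B = [B, A, A, B]" "pair_subword w' B A = [B, A, A, B]"
    "pair_subword w' A C = [A, C, A, C]" "pair_subword w' C A = [A, C, A, C]"
    "pair_subword w' B C = [B, C, C, B]" "pair_subword w' C B = [B, C, C, B]"
  using assms by (auto simp: pair_subword_def filter_pair_notin)

lemma nanoword_move3_letters:
  assumes "nanoword (lab, x @ [A, B] @ y @ [A, C] @ z @ [B, C] @ t)" "distinct [A, B, C]"
  shows "A \<notin> set (x @ y @ z @ t)" "B \<notin> set (x @ y @ z @ t)" "C \<notin> set (x @ y @ z @ t)"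
    and "D \<in> set (x @ y @ z @ t) \<Longrightarrow> count_list (x @ y @ z @ t) D = 2"
proof -
  define w where "w = x @ [A, B] @ y @ [A, C] @ z @ [B, C] @ t"
  have "set w = {A, B, C} \<union> set (x @ y @ z @ t)"
    by (auto simp: w_def)
  then have count: "count_list w D = 2" if "D \<in> {A, B, C} \<union> set (x @ y @ z @ t)" for D
    using assms(1) that unfolding nanoword_def w_def[symmetric] snd_conv by blast
  show ABC: "A \<notin> set (x @ y @ z @ t)" "B \<notin> set (x @ y @ z @ t)" "C \<notin> set (x @ y @ z @ t)"
    using count[of A] count[of B] count[of C] assms(2) by (auto simp: w_def count_list_0_iff)
  assume "D \<in> set (x @ y @ z @ t)"
  moreover from this have "D \<notin> {A, B, C}"
    using ABC by auto
  ultimately show "count_list (x @ y @ z @ t) D = 2"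
    using count[of D] by (simp add: w_def)
qed

section \<open>A family of homotopy invariants\<close>

definition link_weight :: "('a \<Rightarrow> 'r::comm_ring_1) \<Rightarrow> (nat \<Rightarrow> 'a) \<Rightarrow> nat list \<Rightarrow> nat \<Rightarrow> 'r" where
  "link_weight \<phi> lab w X = (\<Sum>Y\<in>set w. link_sign w X Y * \<phi> (lab Y))"

lemma link_weight_move1:
  fixes \<phi> :: "'a \<Rightarrow> 'r::comm_ring_1"
  assumes "A \<notin> set (x @ y)"
  shows "link_weight \<phi> lab (x @ [A, A] @ y) A = 0"
    and "X \<noteq> A \<Longrightarrow> link_weight \<phi> lab (x @ [A, A] @ y) X = link_weight \<phi> lab (x @ y) X"
proof -
  define w where "w = x @ [A, A] @ y"
  have "pair_subword w X A = pair_subword x X A @ [A, A] @ pair_subword y X A" for X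
    by (simp add: w_def pair_subword_def)
  note adjacent = pair_data_adjacent[OF this]
  have set_w: "set w = insert A (set (x @ y))" and w': "removeAll A w = x @ y"
    using assms by (auto simp: w_def)
  show "link_weight \<phi> lab w A = 0"
    by (simp add: link_weight_def adjacent)
  show "link_weight \<phi> lab w X = link_weight \<phi> lab (x @ y) X" if "X \<noteq> A"
  proof -
    have "link_sign w X Y = (link_sign (x @ y) X Y :: 'r)" if "Y \<in> set (x @ y)" for Y
      unfolding w'[symmetric]
      by (rule pair_data_removeAll[symmetric]) (use \<open>X \<noteq> A\<close> that assms in auto)
    then show ?thesis
      using assms by (simp add: link_weight_def set_w adjacent)
  qed
qed

lemma link_weight_move2:
  fixes \<phi> :: "'a \<Rightarrow> 'r::comm_ring_1"
  assumes AB: "A \<noteq> B" "A \<notin> set (x @ y @ z)" "B \<notin> set (x @ y @ z)"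
    and lab: "\<phi> (lab B) = - \<phi> (lab A)"
  defines "w \<equiv> x @ [A, B] @ y @ [B, A] @ z"
  shows "link_weight \<phi> lab w B = link_weight \<phi> lab w A"
    and "X \<in> set (x @ y @ z) \<Longrightarrow> link_weight \<phi> lab w X = link_weight \<phi> lab (x @ y @ z) X"
proof -
  define v where "v = x @ y @ z"
  have A: "A \<notin> set v" and B: "B \<notin> set v"
    using AB by (simp_all add: v_def)
  have set_w: "set w = {A, B} \<union> set v" and w': "removeAll A (removeAll B w) = v"
    using AB by (auto simp: w_def v_def)
  note twin = pair_data_move2[OF AB, folded w_def v_def]
  have "pair_subword w A B = [A, B, B, A]"
    using AB by (simp add: w_def pair_subword_def filter_pair_notin)
  then have "link_sign w A B = (0::'r)" "link_sign w B A = (0::'r)"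
    using AB by (simp_all add: link_sign_def pair_subword_commute[of w B A])
  then show "link_weight \<phi> lab w B = link_weight \<phi> lab w A"
    using AB A B by (simp add: link_weight_def set_w twin)
  show "link_weight \<phi> lab w X = link_weight \<phi> lab (x @ y @ z) X" if "X \<in> set (x @ y @ z)"
  proof -
    have X: "X \<in> set v"
      using that by (simp add: v_def)
    have "link_sign w X Y = (link_sign v X Y :: 'r)" if "Y \<in> set v" for Y
    proof -
      have "link_sign v X Y = (link_sign (removeAll B w) X Y :: 'r)"
        unfolding w'[symmetric] by (rule pair_data_removeAll) (use X that A in auto)
      also have "\<dots> = link_sign w X Y"
        by (rule pair_data_removeAll) (use X that B in auto)
      finally show ?thesis
        by simp
    qed
    then show ?thesis
      using X A B AB lab by (simp add: link_weight_def set_w twin flip: v_def)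
  qed
qed

lemma link_weight_move3:
  fixes \<phi> :: "'a \<Rightarrow> 'r::comm_ring_1"
  assumes ABC: "distinct [A, B, C]" "A \<notin> set (x @ y @ z @ t)" "B \<notin> set (x @ y @ z @ t)"
      "C \<notin> set (x @ y @ z @ t)"
    and count: "\<And>D. D \<in> set (x @ y @ z @ t) \<Longrightarrow> count_list (x @ y @ z @ t) D = 2"
    and lab: "lab A = lab B" "lab B = lab C"
  defines "w \<equiv> x @ [A, B] @ y @ [A, C] @ z @ [B, C] @ t"
    and "w' \<equiv> x @ [B, A] @ y @ [C, A] @ z @ [C, B] @ t"
  shows "link_weight \<phi> lab w X = link_weight \<phi> lab w' X"
    and "link_weight \<phi> lab w B = link_weight \<phi> lab w A + link_weight \<phi> lab w C"
proof -
  define u where "u = x @ y @ z @ t"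
  have set_w: "set w = {A, B, C} \<union> set u" "set w' = {A, B, C} \<union> set u"
    by (auto simp: w_def w'_def u_def)
  have ABC_u: "A \<notin> set u" "B \<notin> set u" "C \<notin> set u"
    using ABC by (simp_all add: u_def)
  have outside: "link_sign w X Y = (link_sign w' X Y :: 'r)"
    if "X \<notin> {A, B, C} \<or> Y \<notin> {A, B, C}" for X Y
    unfolding w_def w'_def by (rule pair_data_cong(2)[OF pair_subword_move3[OF that]])
  have outside_u: "link_sign w X Y = (link_sign w' X Y :: 'r)" if "Y \<in> set u" for X Y
    using that ABC_u by (intro outside) auto
  note sub = pair_subwords_move3[OF ABC, folded w_def w'_def]
  have signs: "link_sign w A B = (1::'r)" "link_sign w B A = (-1::'r)" "link_sign w A C = (0::'r)"
    "link_sign w C A = (0::'r)" "link_sign w B C = (1::'r)" "link_sign w C B = (-1::'r)"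
    "link_sign w' A B = (0::'r)" "link_sign w' B A = (0::'r)" "link_sign w' A C = (1::'r)"
    "link_sign w' C A = (-1::'r)" "link_sign w' B C = (0::'r)" "link_sign w' C B = (0::'r)"
    using ABC(1) by (simp_all add: link_sign_def sub)
  show "link_weight \<phi> lab w X = link_weight \<phi> lab w' X"
  proof (cases "X \<in> {A, B, C}")
    case True
    then show ?thesis
      using ABC(1) ABC_u lab by (auto simp: link_weight_def set_w signs outside_u)
  next
    case False
    then show ?thesis
      by (simp add: link_weight_def set_w outside)
  qed
  have "link_sign w B D = link_sign w A D + (link_sign w C D :: 'r)" if "D \<in> set u" for D
    using that ABC ABC_u count unfolding w_def u_def by (intro link_sign_move3) auto
  then show "link_weight \<phi> lab w B = link_weight \<phi> lab w A + link_weight \<phi> lab w C"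
    using ABC(1) ABC_u lab by (simp add: link_weight_def set_w signs sum.distrib algebra_simps)
qed

definition letter_term ::
    "('a \<Rightarrow> 'r::comm_ring_1) \<Rightarrow> ('a \<Rightarrow> 'r \<Rightarrow> 'r) \<Rightarrow> (nat \<Rightarrow> 'a) \<Rightarrow> nat list \<Rightarrow> nat \<Rightarrow> 'r" where
  "letter_term \<phi> g lab w X = g (lab X) (link_weight \<phi> lab w X)"

definition pair_term :: "('a \<Rightarrow> 'r::comm_ring_1) \<Rightarrow> (shape \<Rightarrow> 'a \<Rightarrow> 'a \<Rightarrow> 'r \<Rightarrow> 'r \<Rightarrow> 'r) \<Rightarrow>
    (nat \<Rightarrow> 'a) \<Rightarrow> nat list \<Rightarrow> nat \<Rightarrow> nat \<Rightarrow> 'r" where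
  "pair_term \<phi> H lab w X Y =
     H (pair_shape w X Y) (lab X) (lab Y) (link_weight \<phi> lab w X) (link_weight \<phi> lab w Y)"

fun pair_invariant :: "('a \<Rightarrow> 'r::comm_ring_1) \<Rightarrow> ('a \<Rightarrow> 'r \<Rightarrow> 'r) \<Rightarrow>
    (shape \<Rightarrow> 'a \<Rightarrow> 'a \<Rightarrow> 'r \<Rightarrow> 'r \<Rightarrow> 'r) \<Rightarrow> 'a nanoword \<Rightarrow> 'r" where
  "pair_invariant \<phi> g H (lab, w) =
     (\<Sum>X\<in>set w. letter_term \<phi> g lab w X) + (\<Sum>X\<in>set w. \<Sum>Y\<in>set w. pair_term \<phi> H lab w X Y)"

lemma sum_square_union:
  fixes F :: "'b \<Rightarrow> 'b \<Rightarrow> 'c::comm_monoid_add"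
  assumes "finite T" "finite S" "T \<inter> S = {}"
  shows "(\<Sum>X\<in>T \<union> S. \<Sum>Y\<in>T \<union> S. F X Y) =
    (\<Sum>X\<in>T. \<Sum>Y\<in>T. F X Y) + (\<Sum>X\<in>S. \<Sum>Y\<in>T. F X Y + F Y X) + (\<Sum>X\<in>S. \<Sum>Y\<in>S. F X Y)"
  using assms by (simp add: sum.union_disjoint sum.distrib sum.swap[of _ T S] algebra_simps)

lemma pair_invariant_iso:
  assumes "nw_iso u v"
  shows "pair_invariant \<phi> g H u = pair_invariant \<phi> g H v"
proof -
  obtain lab w lab' f where u: "u = (lab, w)" and v: "v = (lab', map f w)"
    and inj: "inj_on f (set w)" and lab': "\<And>X. X \<in> set w \<Longrightarrow> lab' (f X) = lab X"
    using assms unfolding nw_iso_def by (metis prod.collapse)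
  have weight: "link_weight \<phi> lab' (map f w) (f X) = link_weight \<phi> lab w X" if "X \<in> set w" for X
    using inj that by (simp add: link_weight_def sum.reindex pair_data_map lab')
  show ?thesis
    using inj unfolding u v
    by (simp add: sum.reindex letter_term_def pair_term_def weight pair_data_map lab')
qed

text \<open>The vanishing conditions make the invariant blind to the first move, the oddness conditions
  to the second, and the last identity to the third.\<close>

locale admissible =
  fixes \<tau> :: "'a \<Rightarrow> 'a" and \<phi> :: "'a \<Rightarrow> 'r::comm_ring_1"
    and g :: "'a \<Rightarrow> 'r \<Rightarrow> 'r" and H :: "shape \<Rightarrow> 'a \<Rightarrow> 'a \<Rightarrow> 'r \<Rightarrow> 'r \<Rightarrow> 'r"
  assumes g_zero: "g x 0 = 0"
    and H_Nested_zero: "H Nested x y p 0 = 0"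
    and H_Disjoint_zero: "H Disjoint x y 0 q = 0" "H Disjoint x y p 0 = 0"
    and H_Other: "H Other x y p q = 0"
    and phi_odd: "\<phi> (\<tau> x) = - \<phi> x"
    and g_odd: "g (\<tau> x) s = - g x s"
    and H_odd: "H r (\<tau> x) y p q = - H r x y p q" "H r x (\<tau> y) p q = - H r x y p q"
    and H_Nested_tau: "H Nested x (\<tau> x) s s = 0"
    and H_move3: "H Linked x x p (p + q) + H Disjoint x x p q + H Linked x x (p + q) q
      = H Nested x x (p + q) p + H Linked x x p q + H Nested x x (p + q) q"
begin

lemma H_zero_right: "r \<noteq> Linked \<Longrightarrow> H r x y p 0 = 0"
  by (cases r) (simp_all add: H_Nested_zero H_Disjoint_zero H_Other)

lemma H_zero_left: "r \<noteq> Linked \<Longrightarrow> r \<noteq> Nested \<Longrightarrow> H r x y 0 q = 0"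
  by (cases r) (simp_all add: H_Disjoint_zero H_Other)

lemma pair_invariant_move1:
  assumes nw: "nanoword (lab, x @ [A, A] @ y)"
  shows "pair_invariant \<phi> g H (lab, x @ [A, A] @ y) = pair_invariant \<phi> g H (lab, x @ y)"
proof -
  define w w' where "w = x @ [A, A] @ y" and "w' = x @ y"
  have "count_list w A = 2"
    using nw by (simp add: nanoword_def w_def)
  then have A: "A \<notin> set w'"
    by (simp add: w_def w'_def count_list_0_iff)
  then have set_w: "set w = {A} \<union> set w'" and w': "removeAll A w = w'"
    by (auto simp: w_def w'_def)
  define n where "n = link_weight \<phi> lab w"
  note weight = link_weight_move1[OF A[unfolded w'_def], where \<phi> = \<phi> and lab = lab,
      folded w_def w'_def n_def]
  have weight_S: "n X = link_weight \<phi> lab w' X" if "X \<in> set w'" for X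
    using that A weight(2)[of X] by auto
  have shape_S: "pair_shape w X Y = pair_shape w' X Y" if "X \<in> set w'" "Y \<in> set w'" for X Y
    using that A by (metis w' pair_data_removeAll(1))
  have "pair_subword w X A = pair_subword x X A @ [A, A] @ pair_subword y X A" for X
    by (simp add: w_def pair_subword_def)
  note adjacent = pair_data_adjacent[OF this]
  have letters: "(\<Sum>X\<in>set w. letter_term \<phi> g lab w X) = (\<Sum>X\<in>set w'. letter_term \<phi> g lab w' X)"
    using A by (simp add: set_w letter_term_def n_def[symmetric] weight g_zero weight_S)
  have "pair_term \<phi> H lab w A Y = 0" "pair_term \<phi> H lab w Y A = 0" for Y
    by (simp_all add: pair_term_def n_def[symmetric] weight adjacent H_zero_left H_zero_right)
  moreover have "pair_term \<phi> H lab w X Y = pair_term \<phi> H lab w' X Y"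
    if "X \<in> set w'" "Y \<in> set w'" for X Y
    using that by (simp add: pair_term_def n_def[symmetric] weight_S shape_S)
  ultimately have pairs: "(\<Sum>X\<in>set w. \<Sum>Y\<in>set w. pair_term \<phi> H lab w X Y)
      = (\<Sum>X\<in>set w'. \<Sum>Y\<in>set w'. pair_term \<phi> H lab w' X Y)"
    using A unfolding set_w by (subst sum_square_union) simp_all
  show ?thesis
    using letters pairs by (simp add: w_def w'_def)
qed

lemma pair_invariant_move2:
  assumes nw: "nanoword (lab, x @ [A, B] @ y @ [B, A] @ z)" and lab_B: "lab B = \<tau> (lab A)"
  shows "pair_invariant \<phi> g H (lab, x @ [A, B] @ y @ [B, A] @ z)
       = pair_invariant \<phi> g H (lab, x @ y @ z)"
proof -
  define w w' where "w = x @ [A, B] @ y @ [B, A] @ z" and "w' = x @ y @ z"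
  have "count_list w A = 2" "count_list w B = 2"
    using nw by (simp_all add: nanoword_def w_def)
  then have AB: "A \<noteq> B" and A: "A \<notin> set w'" and B: "B \<notin> set w'"
    by (auto simp: w_def w'_def count_list_0_iff split: if_splits)
  then have set_w: "set w = {A, B} \<union> set w'" and w': "removeAll A (removeAll B w) = w'"
    by (auto simp: w_def w'_def)
  have phi_B: "\<phi> (lab B) = - \<phi> (lab A)"
    by (simp add: lab_B phi_odd)
  define n where "n = link_weight \<phi> lab w"
  note weight = link_weight_move2[where \<phi> = \<phi> and lab = lab,
      OF AB A[unfolded w'_def] B[unfolded w'_def] phi_B, folded w_def w'_def n_def]
  note twin = pair_data_move2[OF AB A[unfolded w'_def] B[unfolded w'_def], folded w_def w'_def]
  have shape_S: "pair_shape w X Y = pair_shape w' X Y" if "X \<in> set w'" "Y \<in> set w'" for X Y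
    using that A B by (metis w' pair_data_removeAll(1))
  have "pair_subword w A B = [A, B, B, A]"
    using A B by (simp add: w_def w'_def pair_subword_def filter_pair_notin)
  then have shape_AB: "pair_shape w A B = Nested" "pair_shape w B A = Other"
    using AB by (simp_all add: pair_shape_def pair_subword_commute[of w B A])
  have letters: "(\<Sum>X\<in>set w. letter_term \<phi> g lab w X) = (\<Sum>X\<in>set w'. letter_term \<phi> g lab w' X)"
    using A B AB by (simp add: set_w letter_term_def n_def[symmetric] weight lab_B g_odd)
  have "pair_term \<phi> H lab w X Y = pair_term \<phi> H lab w' X Y" if "X \<in> set w'" "Y \<in> set w'" for X Y
    using that by (simp add: pair_term_def n_def[symmetric] weight shape_S)
  moreover have "pair_term \<phi> H lab w X A + pair_term \<phi> H lab w A X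
      + (pair_term \<phi> H lab w X B + pair_term \<phi> H lab w B X) = 0" if "X \<in> set w'" for X
    using that by (simp add: pair_term_def n_def[symmetric] weight twin lab_B H_odd)
  moreover have "(\<Sum>X\<in>{A, B}. \<Sum>Y\<in>{A, B}. pair_term \<phi> H lab w X Y) = 0"
    using AB by (simp add: pair_term_def n_def[symmetric] weight shape_AB lab_B H_Other H_Nested_tau)
  ultimately have pairs: "(\<Sum>X\<in>set w. \<Sum>Y\<in>set w. pair_term \<phi> H lab w X Y)
      = (\<Sum>X\<in>set w'. \<Sum>Y\<in>set w'. pair_term \<phi> H lab w' X Y)"
    using A B AB unfolding set_w by (subst sum_square_union) (simp_all add: sum.distrib[symmetric])
  show ?thesis
    using letters pairs by (simp add: w_def w'_def)
qed

lemma pair_invariant_move3: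
  assumes nw: "nanoword (lab, x @ [A, B] @ y @ [A, C] @ z @ [B, C] @ t)"
    and ABC: "distinct [A, B, C]" and lab: "lab A = lab B" "lab B = lab C"
  shows "pair_invariant \<phi> g H (lab, x @ [A, B] @ y @ [A, C] @ z @ [B, C] @ t)
       = pair_invariant \<phi> g H (lab, x @ [B, A] @ y @ [C, A] @ z @ [C, B] @ t)"
proof -
  define u w w' where "u = x @ y @ z @ t"
    and "w = x @ [A, B] @ y @ [A, C] @ z @ [B, C] @ t"
    and "w' = x @ [B, A] @ y @ [C, A] @ z @ [C, B] @ t"
  note outside_ABC = nanoword_move3_letters(1-3)[OF nw ABC]
  define n where "n = link_weight \<phi> lab w"
  note weight = link_weight_move3[OF ABC outside_ABC nanoword_move3_letters(4)[OF nw ABC] lab,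
      where \<phi> = \<phi>, folded w_def w'_def]
  have n': "link_weight \<phi> lab w' = n" and n_B: "n B = n A + n C"
    using weight by (auto simp: n_def)
  have set_w: "set w = {A, B, C} \<union> set u" "set w' = {A, B, C} \<union> set u"
    by (auto simp: w_def w'_def u_def)
  have letters: "(\<Sum>X\<in>set w. letter_term \<phi> g lab w X) = (\<Sum>X\<in>set w'. letter_term \<phi> g lab w' X)"
    by (simp add: set_w letter_term_def n_def[symmetric] n')
  have "pair_shape w X Y = pair_shape w' X Y" if "X \<in> set u \<or> Y \<in> set u" for X Y
    using that outside_ABC unfolding w_def w'_def
    by (intro pair_data_cong(1) pair_subword_move3) (auto simp: u_def)
  then have outside: "pair_term \<phi> H lab w X Y = pair_term \<phi> H lab w' X Y"
    if "X \<in> set u \<or> Y \<in> set u" for X Y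
    using that by (simp add: pair_term_def n_def[symmetric] n')
  note sub = pair_subwords_move3[OF ABC outside_ABC, folded w_def w'_def]
  have "(\<Sum>X\<in>{A, B, C}. \<Sum>Y\<in>{A, B, C}. pair_term \<phi> H lab w X Y)
      = (\<Sum>X\<in>{A, B, C}. \<Sum>Y\<in>{A, B, C}. pair_term \<phi> H lab w' X Y)"
    using ABC H_move3[of "lab C" "n A" "n C"]
    by (simp add: pair_term_def n_def[symmetric] n' n_B lab pair_shape_def sub H_Other algebra_simps)
  then have pairs: "(\<Sum>X\<in>set w. \<Sum>Y\<in>set w. pair_term \<phi> H lab w X Y)
      = (\<Sum>X\<in>set w'. \<Sum>Y\<in>set w'. pair_term \<phi> H lab w' X Y)"
    using outside_ABC unfolding set_w
    by (subst (1 2) sum_square_union) (simp_all add: u_def outside)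
  show ?thesis
    using letters pairs by (simp add: w_def w'_def)
qed

lemma pair_invariant_move:
  assumes "nanoword u" and "nw_move \<tau> u v"
  shows "pair_invariant \<phi> g H u = pair_invariant \<phi> g H v"
proof -
  obtain lab w w' where u: "u = (lab, w)" and v: "v = (lab, w')"
    using assms(2) unfolding nw_move_def by (metis prod.collapse)
  from assms(2) consider
      (move1) x y A where "w = x @ [A, A] @ y" "w' = x @ y"
    | (move2) x y z A B where "w = x @ [A, B] @ y @ [B, A] @ z" "w' = x @ y @ z" "lab B = \<tau> (lab A)"
    | (move3) x y z t A B C where "distinct [A, B, C]" "lab A = lab B" "lab B = lab C"
        "w = x @ [A, B] @ y @ [A, C] @ z @ [B, C] @ t"
        "w' = x @ [B, A] @ y @ [C, A] @ z @ [C, B] @ t"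
    unfolding nw_move_def u v by auto
  then show ?thesis
  proof cases
    case move1
    show ?thesis
      using assms(1) unfolding u v move1 by (rule pair_invariant_move1)
  next
    case move2
    show ?thesis
      using assms(1) move2(3) unfolding u v move2(1,2) by (rule pair_invariant_move2)
  next
    case move3
    show ?thesis
      using assms(1) move3(1-3) unfolding u v move3(4,5) by (rule pair_invariant_move3)
  qed
qed

lemma pair_invariant_hstep:
  assumes "nw_hstep \<tau> u v"
  shows "pair_invariant \<phi> g H u = pair_invariant \<phi> g H v"
  using assms unfolding nw_hstep_def by (metis pair_invariant_iso pair_invariant_move)

lemma pair_invariant_homotopic:
  assumes "homotopic \<tau> u v"
  shows "pair_invariant \<phi> g H u = pair_invariant \<phi> g H v"
proof -
  have "(nw_hstep \<tau>)\<^sup>*\<^sup>* u v"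
    using assms by (simp add: homotopic_def)
  then show ?thesis
    by induction (metis pair_invariant_hstep)+
qed

end

section \<open>Short nanowords and the words \<open>w\<^sup>i\<close>\<close>

lemmas pair_invariant_defs =
  letter_term_def pair_term_def link_weight_def link_sign_def pair_shape_def pair_subword_def

lemma nanoword_length_even:
  assumes "nanoword (lab, w)"
  shows "even (length w)"
proof -
  have "length w = (\<Sum>X\<in>set w. count_list w X)"
    by (simp add: sum_count_set)
  also have "\<dots> = (\<Sum>X\<in>set w. 2)"
    using assms by (simp add: nanoword_def)
  finally show ?thesis
    by simp
qed

lemma short_nanoword_cases:
  assumes nw: "nanoword (lab, w)" and short: "length w < 6"
  obtains (empty) "w = []" | (single) A where "w = [A, A]"
    | (disjoint) A B where "A \<noteq> B" "w = [A, A, B, B]"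
    | (nested) A B where "A \<noteq> B" "w = [A, B, B, A]"
    | (linked) A B where "A \<noteq> B" "w = [A, B, A, B]"
proof -
  have count: "\<forall>X\<in>set w. count_list w X = 2"
    using nw by (simp add: nanoword_def)
  have "length w = 0 \<or> length w = 2 \<or> length w = 4"
    using short nanoword_length_even[OF nw] by presburger
  then consider "w = []" | p q where "w = [p, q]" | p q r s where "w = [p, q, r, s]"
    by (auto simp: length_Suc_conv numeral_eq_Suc)
  then show thesis
  proof cases
    case (2 p q)
    then show thesis
      using count single by (auto split: if_splits)
  next
    case (3 p q r s)
    then have "p \<noteq> r \<and> w = [p, p, r, r] \<or> p \<noteq> q \<and> w = [p, q, q, p] \<or> p \<noteq> q \<and> w = [p, q, p, q]"
      using count by (auto split: if_splits)
    then show thesis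
      using disjoint nested linked by blast
  qed (rule empty)
qed

lemma pair_invariant_eq:
  "pair_invariant \<phi> g H u = (\<Sum>X\<in>set (snd u). letter_term \<phi> g (fst u) (snd u) X)
     + (\<Sum>X\<in>set (snd u). \<Sum>Y\<in>set (snd u). pair_term \<phi> H (fst u) (snd u) X Y)"
  by (cases u) simp

lemma set_wabc: "set (snd (wabc i a b c)) = {0, 1, 2}"
  by (auto simp: wabc_def)

text \<open>The value of the invariant on the linked pair \<open>ABAB\<close> with \<open>|A| = x\<close> and \<open>|B| = y\<close>.\<close>

definition linked_pair_value ::
    "('a \<Rightarrow> 'r::comm_ring_1) \<Rightarrow> ('a \<Rightarrow> 'r \<Rightarrow> 'r) \<Rightarrow> (shape \<Rightarrow> 'a \<Rightarrow> 'a \<Rightarrow> 'r \<Rightarrow> 'r \<Rightarrow> 'r) \<Rightarrow>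
      'a \<Rightarrow> 'a \<Rightarrow> 'r" where
  "linked_pair_value \<phi> g H x y = g x (\<phi> y) + g y (- \<phi> x) + H Linked x y (\<phi> y) (- \<phi> x)"

context admissible
begin

lemma pair_invariant_short:
  assumes "nanoword (lab, w)" and "length w < 6"
  shows "pair_invariant \<phi> g H (lab, w) = 0
    \<or> (\<exists>x y. pair_invariant \<phi> g H (lab, w) = linked_pair_value \<phi> g H x y)"
  using assms
proof (cases rule: short_nanoword_cases)
  case (disjoint A B)
  then have "set w = {A, B}"
    by auto
  with disjoint show ?thesis
    by (simp add: pair_invariant_defs g_zero H_Other H_Disjoint_zero)
next
  case (nested A B)
  then have "set w = {A, B}"
    by auto
  with nested show ?thesis
    by (simp add: pair_invariant_defs g_zero H_Other H_Nested_zero)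
next
  case (linked A B)
  then have "set w = {A, B}"
    by auto
  with linked show ?thesis
    by (auto simp: pair_invariant_defs linked_pair_value_def H_Other)
qed (simp_all add: pair_invariant_defs g_zero H_Other)

lemma pair_invariant_wabc:
  "pair_invariant \<phi> g H (wabc 1 a b c) = g a (\<phi> b + \<phi> c) + g b (\<phi> c - \<phi> a) + g c (- \<phi> a - \<phi> b)
     + H Linked a b (\<phi> b + \<phi> c) (\<phi> c - \<phi> a) + H Linked a c (\<phi> b + \<phi> c) (- \<phi> a - \<phi> b)
     + H Linked b c (\<phi> c - \<phi> a) (- \<phi> a - \<phi> b)"
  "pair_invariant \<phi> g H (wabc 2 a b c) = g a (\<phi> b + \<phi> c) + g b (- \<phi> a) + g c (- \<phi> a)
     + H Linked a b (\<phi> b + \<phi> c) (- \<phi> a) + H Linked a c (\<phi> b + \<phi> c) (- \<phi> a)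
     + H Nested b c (- \<phi> a) (- \<phi> a)"
  "pair_invariant \<phi> g H (wabc 3 a b c) = g a (\<phi> c) + g b (\<phi> c) + g c (- \<phi> a - \<phi> b)
     + H Nested a b (\<phi> c) (\<phi> c) + H Linked a c (\<phi> c) (- \<phi> a - \<phi> b)
     + H Linked b c (\<phi> c) (- \<phi> a - \<phi> b)"
  "pair_invariant \<phi> g H (wabc 4 a b c) = g b (\<phi> c) + g c (- \<phi> b)
     + H Nested a b 0 (\<phi> c) + H Nested a c 0 (- \<phi> b) + H Linked b c (\<phi> c) (- \<phi> b)"
  "pair_invariant \<phi> g H (wabc 5 a b c) = g a (\<phi> b) + g b (\<phi> c - \<phi> a) + g c (- \<phi> b)
     + H Linked a b (\<phi> b) (\<phi> c - \<phi> a) + H Disjoint a c (\<phi> b) (- \<phi> b)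
     + H Linked b c (\<phi> c - \<phi> a) (- \<phi> b)"
  unfolding pair_invariant_eq letter_term_def pair_term_def link_weight_def set_wabc
  by (simp_all add: wabc_def lab3_def pair_invariant_defs g_zero H_Other algebra_simps)

end

section \<open>Invariants detecting the words \<open>w\<^sup>i\<close>\<close>

definition detectable :: "('a \<Rightarrow> 'a) \<Rightarrow> 'a nanoword \<Rightarrow> bool" where
  "detectable \<tau> u \<longleftrightarrow> (\<exists>(\<phi> :: 'a \<Rightarrow> 'a \<Rightarrow> 6) g H. admissible \<tau> \<phi> g H
     \<and> (\<forall>x y. linked_pair_value \<phi> g H x y = 0) \<and> pair_invariant \<phi> g H u \<noteq> 0)"

lemma homotopic_nanoword:
  assumes "homotopic \<tau> u v"
  shows "nanoword v"
proof -
  have "(nw_hstep \<tau>)\<^sup>*\<^sup>* u v" "nanoword u"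
    using assms by (simp_all add: homotopic_def)
  then show ?thesis
    by induction (auto simp: nw_hstep_def)
qed

lemma detectable_homotopic_length:
  assumes "detectable \<tau> u" and "homotopic \<tau> u v"
  shows "6 \<le> length (snd v)"
proof (rule ccontr)
  obtain \<phi> :: "'a \<Rightarrow> 'a \<Rightarrow> 6" and g H where adm: "admissible \<tau> \<phi> g H"
    and linked: "\<And>x y. linked_pair_value \<phi> g H x y = 0" and nonzero: "pair_invariant \<phi> g H u \<noteq> 0"
    using assms(1) unfolding detectable_def by blast
  obtain lab w where v: "v = (lab, w)"
    by fastforce
  assume "\<not> 6 \<le> length (snd v)"
  then have "pair_invariant \<phi> g H v = 0"
    using admissible.pair_invariant_short[OF adm, of lab w] homotopic_nanoword[OF assms(2)]
    by (auto simp: v linked)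
  then show False
    using admissible.pair_invariant_homotopic[OF adm assms(2)] nonzero by simp
qed

lemma nw_norm_eq_3_if_detectable:
  assumes "nanoword u" and "length (snd u) = 6" and "detectable \<tau> u"
  shows "nw_norm \<tau> u = 3"
proof -
  have "(LEAST n. \<exists>v. homotopic \<tau> u v \<and> length (snd v) = n) = 6"
  proof (rule Least_equality)
    show "\<exists>v. homotopic \<tau> u v \<and> length (snd v) = 6"
      using assms(1,2) unfolding homotopic_def by blast
  qed (use detectable_homotopic_length[OF assms(3)] in blast)
  then show ?thesis
    by (simp add: nw_norm_def)
qed

definition weight_count :: "('a \<Rightarrow> 'r) \<Rightarrow> 'r \<Rightarrow> 'a \<Rightarrow> 'r \<Rightarrow> 'r::comm_ring_1" where
  "weight_count \<psi> k x s = (if s = k then \<psi> x else 0)"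

definition nested_count ::
    "('a \<Rightarrow> 'a) \<Rightarrow> ('a \<Rightarrow> 'r) \<Rightarrow> ('a \<Rightarrow> 'r) \<Rightarrow> 'r \<Rightarrow> shape \<Rightarrow> 'a \<Rightarrow> 'a \<Rightarrow> 'r \<Rightarrow> 'r \<Rightarrow> 'r::comm_ring_1" where
  "nested_count \<tau> \<psi> \<chi> k r x y p q =
     (if r = Nested \<and> x \<noteq> y \<and> x \<noteq> \<tau> y \<and> q = k then \<psi> x * \<chi> y else 0)"

definition linked_count ::
    "('a \<Rightarrow> 'a) \<Rightarrow> ('a \<Rightarrow> 'r) \<Rightarrow> ('a \<Rightarrow> 'r) \<Rightarrow> shape \<Rightarrow> 'a \<Rightarrow> 'a \<Rightarrow> 'r \<Rightarrow> 'r \<Rightarrow> 'r::comm_ring_1" where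
  "linked_count \<tau> \<psi> \<chi> r x y p q =
     (if r = Linked \<and> x \<noteq> y \<and> x \<noteq> \<tau> y \<and> p \<noteq> 0 \<and> q = 0 then \<psi> x * \<chi> y else 0)"

definition quadratic_count :: "('a \<Rightarrow> 'r) \<Rightarrow> shape \<Rightarrow> 'a \<Rightarrow> 'a \<Rightarrow> 'r \<Rightarrow> 'r \<Rightarrow> 'r::comm_ring_1" where
  "quadratic_count \<psi> r x y p q =
     (if r = Nested then \<psi> x * \<psi> y * q * (p - q)
      else if r = Disjoint then 2 * \<psi> x * \<psi> y * p * q else 0)"

lemma admissible_weight_count:
  assumes "\<And>x. \<phi> (\<tau> x) = - \<phi> x" "\<And>x. \<psi> (\<tau> x) = - \<psi> x" "k \<noteq> 0"
  shows "admissible \<tau> \<phi> (weight_count \<psi> k) (\<lambda>_ _ _ _ _. 0)"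
  using assms by unfold_locales (auto simp: weight_count_def)

lemma admissible_quadratic_count:
  assumes "\<And>x. \<phi> (\<tau> x) = - \<phi> x" "\<And>x. \<psi> (\<tau> x) = - \<psi> x"
  shows "admissible \<tau> \<phi> (\<lambda>_ _. 0) (quadratic_count \<psi>)"
  using assms by unfold_locales (auto simp: quadratic_count_def algebra_simps)

text \<open>Since \<open>3 = -3\<close> in \<open>\<int>/6\<close>, the value \<open>3\<close> at a fixed point of \<open>\<tau>\<close> keeps \<open>odd_delta \<tau> z\<close> odd
  in \<open>z\<close> without making it vanish.\<close>

definition odd_delta :: "('a \<Rightarrow> 'a) \<Rightarrow> 'a \<Rightarrow> 'a \<Rightarrow> 6" where
  "odd_delta \<tau> z = (\<lambda>u. if u = z then (if \<tau> z = z then 3 else 1) else if u = \<tau> z then -1 else 0)"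

text \<open>Products of the vectors \<open>odd_delta \<tau> z\<close> may vanish; products of their constant
  coordinate functions do not (\<open>delta_coord_mult_nonzero\<close>).\<close>

definition delta_coord :: "('a \<Rightarrow> 'a) \<Rightarrow> 'a \<Rightarrow> 'a \<Rightarrow> 'a \<Rightarrow> 6" where
  "delta_coord \<tau> p z = (\<lambda>_. odd_delta \<tau> z p)"

lemma odd_delta_nonzero: "odd_delta \<tau> z \<noteq> 0"
proof
  assume "odd_delta \<tau> z = 0"
  then have "odd_delta \<tau> z z = 0"
    by simp
  then show False
    by (simp add: odd_delta_def split: if_splits)
qed

lemma delta_coord_mult_nonzero: "delta_coord \<tau> p p * delta_coord \<tau> q q \<noteq> 0"
proof -
  have "(delta_coord \<tau> p p * delta_coord \<tau> q q) p \<noteq> 0"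
    by (simp add: delta_coord_def odd_delta_def)
  then show ?thesis
    by (metis zero_fun_apply)
qed

context
  fixes \<tau> :: "'a \<Rightarrow> 'a"
  assumes involution: "\<And>x. \<tau> (\<tau> x) = x"
begin

lemma tau_eq_iff: "\<tau> x = y \<longleftrightarrow> x = \<tau> y"
  using involution by metis

lemma odd_delta_tau: "odd_delta \<tau> (\<tau> z) = - odd_delta \<tau> z"
  using involution[of z] by (auto simp: odd_delta_def fun_eq_iff)

lemma delta_coord_tau: "delta_coord \<tau> p (\<tau> z) = - delta_coord \<tau> p z"
  by (simp add: delta_coord_def odd_delta_tau fun_eq_iff)

lemma odd_delta_inj: "odd_delta \<tau> x = odd_delta \<tau> y \<longleftrightarrow> x = y"
proof
  assume "odd_delta \<tau> x = odd_delta \<tau> y"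
  then have "odd_delta \<tau> x x = odd_delta \<tau> y x"
    by simp
  then show "x = y"
    using involution[of x] involution[of y] by (auto simp: odd_delta_def split: if_splits)
qed simp

lemma odd_delta_add_ne_zero:
  assumes "y \<noteq> \<tau> x"
  shows "odd_delta \<tau> x + odd_delta \<tau> y \<noteq> 0"
proof
  assume "odd_delta \<tau> x + odd_delta \<tau> y = 0"
  then have "odd_delta \<tau> y = odd_delta \<tau> (\<tau> x)"
    by (simp add: odd_delta_tau eq_neg_iff_add_eq_0 add.commute)
  then show False
    using assms by (simp add: odd_delta_inj)
qed

lemma odd_delta_add_ne_delta:
  assumes "y \<noteq> \<tau> x"
  shows "odd_delta \<tau> z \<noteq> odd_delta \<tau> x + odd_delta \<tau> y"
proof
  assume "odd_delta \<tau> z = odd_delta \<tau> x + odd_delta \<tau> y"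
  then have sum: "odd_delta \<tau> x + odd_delta \<tau> y = odd_delta \<tau> z"
    by simp
  have at_x: "odd_delta \<tau> x x + odd_delta \<tau> y x = odd_delta \<tau> z x"
    and at_y: "odd_delta \<tau> x y + odd_delta \<tau> y y = odd_delta \<tau> z y"
    using fun_cong[OF sum, of x] fun_cong[OF sum, of y] by simp_all
  show False
  proof (cases "y = x")
    case True
    then show False
      using at_x assms involution[of x] involution[of z]
      by (auto simp: odd_delta_def split: if_splits)
  next
    case False
    then have "odd_delta \<tau> y x = 0" "odd_delta \<tau> x y = 0"
      using assms involution[of y] by (auto simp: odd_delta_def)
    then have "odd_delta \<tau> z x \<noteq> 0" "odd_delta \<tau> z y \<noteq> 0"
      using at_x at_y by (auto simp: odd_delta_def split: if_splits)
    then have "x = z \<or> x = \<tau> z" "y = z \<or> y = \<tau> z"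
      by (auto simp: odd_delta_def split: if_splits)
    then show False
      using False assms involution[of z] by auto
  qed
qed

lemma admissible_nested_count:
  assumes "\<And>x. \<phi> (\<tau> x) = - \<phi> x" "\<And>x. \<psi> (\<tau> x) = - \<psi> x" "\<And>x. \<chi> (\<tau> x) = - \<chi> x"
    and "k \<noteq> 0"
  shows "admissible \<tau> \<phi> (\<lambda>_ _. 0) (nested_count \<tau> \<psi> \<chi> k)"
  using assms by unfold_locales (auto simp: nested_count_def involution tau_eq_iff)

lemma admissible_linked_count:
  assumes "\<And>x. \<phi> (\<tau> x) = - \<phi> x" "\<And>x. \<psi> (\<tau> x) = - \<psi> x" "\<And>x. \<chi> (\<tau> x) = - \<chi> x"
  shows "admissible \<tau> \<phi> (\<lambda>_ _. 0) (linked_count \<tau> \<psi> \<chi>)"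
  using assms by unfold_locales (auto simp: linked_count_def involution tau_eq_iff)

lemma admissible_delta_weight:
  assumes "y \<noteq> \<tau> x"
  shows "admissible \<tau> (odd_delta \<tau>) (weight_count (odd_delta \<tau>) (odd_delta \<tau> x + odd_delta \<tau> y))
    (\<lambda>_ _ _ _ _. 0)"
  using odd_delta_add_ne_zero[OF assms]
  by (intro admissible_weight_count odd_delta_tau)

lemma detectable_by_weight_count:
  assumes "y \<noteq> \<tau> x"
    and "pair_invariant (odd_delta \<tau>) (weight_count (odd_delta \<tau>) (odd_delta \<tau> x + odd_delta \<tau> y))
      (\<lambda>_ _ _ _ _. 0) u = odd_delta \<tau> z"
  shows "detectable \<tau> u"
proof -
  have "linked_pair_value (odd_delta \<tau>) (weight_count (odd_delta \<tau>) (odd_delta \<tau> x + odd_delta \<tau> y))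
      (\<lambda>_ _ _ _ _. 0) p q = 0" for p q
    using odd_delta_add_ne_delta[OF assms(1), of q] odd_delta_add_ne_delta[OF assms(1), of "\<tau> p"]
    by (simp add: linked_pair_value_def weight_count_def odd_delta_tau)
  then show ?thesis
    unfolding detectable_def using admissible_delta_weight[OF assms(1)] assms(2) odd_delta_nonzero
    by metis
qed

lemma detectable_by_nested_count:
  assumes "k \<noteq> 0"
    and "pair_invariant (odd_delta \<tau>) (\<lambda>_ _. 0)
      (nested_count \<tau> (delta_coord \<tau> p) (delta_coord \<tau> q) k) u \<noteq> 0"
  shows "detectable \<tau> u"
  unfolding detectable_def
  using admissible_nested_count[where \<phi> = "odd_delta \<tau>" and \<psi> = "delta_coord \<tau> p"
      and \<chi> = "delta_coord \<tau> q", OF odd_delta_tau delta_coord_tau delta_coord_tau assms(1)] assms(2)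
  by (force simp: linked_pair_value_def nested_count_def)

lemma detectable_by_linked_count:
  assumes "pair_invariant (odd_delta \<tau>) (\<lambda>_ _. 0)
    (linked_count \<tau> (delta_coord \<tau> p) (delta_coord \<tau> q)) u \<noteq> 0"
  shows "detectable \<tau> u"
  unfolding detectable_def
  using admissible_linked_count[where \<phi> = "odd_delta \<tau>" and \<psi> = "delta_coord \<tau> p"
      and \<chi> = "delta_coord \<tau> q", OF odd_delta_tau delta_coord_tau delta_coord_tau] assms
  by (force simp: linked_pair_value_def linked_count_def odd_delta_nonzero)

lemma detectable_by_quadratic_count:
  assumes "pair_invariant (odd_delta \<tau>) (\<lambda>_ _. 0) (quadratic_count (delta_coord \<tau> p)) u \<noteq> 0"
  shows "detectable \<tau> u"
  unfolding detectable_def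
  using admissible_quadratic_count[where \<phi> = "odd_delta \<tau>" and \<psi> = "delta_coord \<tau> p",
      OF odd_delta_tau delta_coord_tau] assms
  by (force simp: linked_pair_value_def quadratic_count_def)

lemma detectable_wabc1_degenerate:
  assumes "a \<noteq> \<tau> b" and "- odd_delta \<tau> a - odd_delta \<tau> b = odd_delta \<tau> b + odd_delta \<tau> a"
  shows "detectable \<tau> (wabc 1 a b a)"
proof -
  have "a \<noteq> b"
  proof
    assume "a = b"
    with assms(2) have "4 * odd_delta \<tau> a = 0"
      by (simp add: algebra_simps)
    from fun_cong[OF this, of a] have "4 * odd_delta \<tau> a a = 0"
      by simp
    then have "\<tau> a = a"
      by (simp add: odd_delta_def split: if_splits)
    with \<open>a = b\<close> assms(1) show False
      by simp
  qed
  interpret admissible \<tau> "odd_delta \<tau>" "\<lambda>_ _. 0" "linked_count \<tau> (delta_coord \<tau> a) (delta_coord \<tau> b)"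
    by (intro admissible_linked_count odd_delta_tau delta_coord_tau)
  show ?thesis
    using \<open>a \<noteq> b\<close> assms(1) odd_delta_add_ne_zero[OF assms(1)] delta_coord_mult_nonzero[of \<tau> a b]
    by (intro detectable_by_linked_count[of a b])
      (unfold pair_invariant_wabc, simp add: linked_count_def add.commute)
qed

lemma detectable_wabc1:
  assumes "a \<noteq> \<tau> b" and "\<tau> b \<noteq> c"
  shows "detectable \<tau> (wabc 1 a b c)"
proof -
  define nA nB nC where "nA = odd_delta \<tau> b + odd_delta \<tau> c"
    and "nB = odd_delta \<tau> c + odd_delta \<tau> (\<tau> a)" and "nC = - odd_delta \<tau> a - odd_delta \<tau> b"
  have expl: "pair_invariant (odd_delta \<tau>) g H (wabc 1 a b c) = g a nA + g b nB + g c nC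
      + H Linked a b nA nB + H Linked a c nA nC + H Linked b c nB nC"
    if "admissible \<tau> (odd_delta \<tau>) g H" for g H
    using admissible.pair_invariant_wabc(1)[OF that]
    by (simp add: nA_def nB_def nC_def odd_delta_tau)
  have cb: "c \<noteq> \<tau> b"
    using assms(2) by simp
  have "b \<noteq> \<tau> a"
    using assms(1) involution by metis
  then have "odd_delta \<tau> a + odd_delta \<tau> b \<noteq> 0"
    by (rule odd_delta_add_ne_zero)
  then have nB_nA: "nB \<noteq> nA"
    by (auto simp: nA_def nB_def odd_delta_tau algebra_simps)
  \<comment> \<open>\<^const>\<open>weight_count\<close> detects a letter whose link weight no other letter shares\<close>
  consider "nC \<noteq> nA" | "nC = nA" "c \<noteq> a" | "nC = nA" "c = a"
    by blast
  then show ?thesis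
  proof cases
    case 1
    show ?thesis
      using 1 nB_nA
      by (intro detectable_by_weight_count[OF cb, of _ a])
        (unfold expl[OF admissible_delta_weight[OF cb]], simp add: weight_count_def nA_def[symmetric])
  next
    case 2
    then have ne: "\<tau> a \<noteq> \<tau> c"
      by (auto simp: tau_eq_iff involution)
    show ?thesis
      using 2 nB_nA
      by (intro detectable_by_weight_count[OF ne, of _ b])
        (unfold expl[OF admissible_delta_weight[OF ne]], simp add: weight_count_def nB_def[symmetric])
  next
    case 3
    then show ?thesis
      using detectable_wabc1_degenerate[OF assms(1)] by (simp add: nA_def nC_def add.commute)
  qed
qed

lemma detectable_wabc2:
  assumes "c \<noteq> \<tau> b"
  shows "detectable \<tau> (wabc 2 a b c)"
proof -
  interpret admissible \<tau> "odd_delta \<tau>" "weight_count (odd_delta \<tau>) (odd_delta \<tau> b + odd_delta \<tau> c)"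
    "\<lambda>_ _ _ _ _. 0"
    using assms by (rule admissible_delta_weight)
  show ?thesis
    using odd_delta_add_ne_delta[OF assms, of "\<tau> a"]
    by (intro detectable_by_weight_count[OF assms, of _ a])
      (unfold pair_invariant_wabc, simp add: weight_count_def odd_delta_tau)
qed

lemma detectable_wabc3:
  assumes "a \<noteq> \<tau> b"
  shows "detectable \<tau> (wabc 3 a b c)"
proof -
  have ne: "\<tau> b \<noteq> \<tau> (\<tau> a)"
    using assms by (auto simp: involution tau_eq_iff)
  interpret admissible \<tau> "odd_delta \<tau>"
    "weight_count (odd_delta \<tau>) (odd_delta \<tau> (\<tau> a) + odd_delta \<tau> (\<tau> b))" "\<lambda>_ _ _ _ _. 0"
    using ne by (rule admissible_delta_weight)
  show ?thesis
    using odd_delta_add_ne_delta[OF ne, of c]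
    by (intro detectable_by_weight_count[OF ne, of _ c])
      (unfold pair_invariant_wabc, simp add: weight_count_def odd_delta_tau algebra_simps)
qed

lemma detectable_wabc4:
  assumes "c \<noteq> \<tau> b"
  shows "detectable \<tau> (wabc 4 a b c)"
proof -
  have cb: "odd_delta \<tau> c \<noteq> - odd_delta \<tau> b"
    using assms by (simp flip: odd_delta_tau add: odd_delta_inj)
  consider "a \<noteq> b \<and> a \<noteq> \<tau> b" | "a \<noteq> c \<and> a \<noteq> \<tau> c" | "c = b" "\<tau> b \<noteq> b" "a = b \<or> a = \<tau> b"
    using assms involution by metis
  then show ?thesis
  proof cases
    case 1
    interpret admissible \<tau> "odd_delta \<tau>" "\<lambda>_ _. 0"
      "nested_count \<tau> (delta_coord \<tau> a) (delta_coord \<tau> b) (odd_delta \<tau> c)"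
      by (intro admissible_nested_count odd_delta_tau delta_coord_tau odd_delta_nonzero)
    show ?thesis
      using 1 cb delta_coord_mult_nonzero[of \<tau> a b]
      by (intro detectable_by_nested_count[of "odd_delta \<tau> c" a b] odd_delta_nonzero)
        (unfold pair_invariant_wabc, simp add: nested_count_def)
  next
    case 2
    interpret admissible \<tau> "odd_delta \<tau>" "\<lambda>_ _. 0"
      "nested_count \<tau> (delta_coord \<tau> a) (delta_coord \<tau> c) (odd_delta \<tau> (\<tau> b))"
      by (intro admissible_nested_count odd_delta_tau delta_coord_tau odd_delta_nonzero)
    show ?thesis
      using 2 cb delta_coord_mult_nonzero[of \<tau> a c]
      by (intro detectable_by_nested_count[of "odd_delta \<tau> (\<tau> b)" a c] odd_delta_nonzero)
        (unfold pair_invariant_wabc, auto simp: nested_count_def odd_delta_tau)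
  next
    case 3
    interpret admissible \<tau> "odd_delta \<tau>" "\<lambda>_ _. 0" "quadratic_count (delta_coord \<tau> b)"
      by (intro admissible_quadratic_count odd_delta_tau delta_coord_tau)
    have "pair_invariant (odd_delta \<tau>) (\<lambda>_ _. 0) (quadratic_count (delta_coord \<tau> b)) (wabc 4 a b c)
        = - (2 * odd_delta \<tau> b * odd_delta \<tau> b * delta_coord \<tau> b a * delta_coord \<tau> b b)"
      unfolding pair_invariant_wabc using 3 by (simp add: quadratic_count_def algebra_simps)
    moreover have "(2 * odd_delta \<tau> b * odd_delta \<tau> b * delta_coord \<tau> b a * delta_coord \<tau> b b) b \<noteq> 0"
      using 3 by (auto simp: delta_coord_def odd_delta_def involution)
    ultimately show ?thesis
      by (intro detectable_by_quadratic_count[of b]) (metis neg_equal_0_iff_equal zero_fun_apply)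
  qed
qed

lemma detectable_wabc5:
  assumes "\<not> (a = b \<and> b = c \<and> a = \<tau> a)"
  shows "detectable \<tau> (wabc 5 a b c)"
proof (cases "a = c")
  case False
  then have ne: "\<tau> a \<noteq> \<tau> c"
    by (auto simp: tau_eq_iff involution)
  interpret admissible \<tau> "odd_delta \<tau>"
    "weight_count (odd_delta \<tau>) (odd_delta \<tau> c + odd_delta \<tau> (\<tau> a))" "\<lambda>_ _ _ _ _. 0"
    using ne by (rule admissible_delta_weight)
  show ?thesis
    using odd_delta_add_ne_delta[OF ne, of b] odd_delta_add_ne_delta[OF ne, of "\<tau> b"]
    by (intro detectable_by_weight_count[OF ne, of _ b])
      (unfold pair_invariant_wabc, simp add: weight_count_def odd_delta_tau algebra_simps)
next
  case ac: True
  show ?thesis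
  proof (cases "a \<noteq> b \<and> a \<noteq> \<tau> b")
    case True
    interpret admissible \<tau> "odd_delta \<tau>" "\<lambda>_ _. 0"
      "linked_count \<tau> (delta_coord \<tau> a) (delta_coord \<tau> b)"
      by (intro admissible_linked_count odd_delta_tau delta_coord_tau)
    show ?thesis
      using True ac delta_coord_mult_nonzero[of \<tau> a b]
      by (intro detectable_by_linked_count[of a b])
        (unfold pair_invariant_wabc, simp add: linked_count_def odd_delta_nonzero)
  next
    case False
    then have "\<tau> a \<noteq> a" "\<tau> b \<noteq> b" "b = a \<or> b = \<tau> a"
      using assms ac by (auto simp: involution tau_eq_iff)
    interpret admissible \<tau> "odd_delta \<tau>" "\<lambda>_ _. 0" "quadratic_count (delta_coord \<tau> a)"
      by (intro admissible_quadratic_count odd_delta_tau delta_coord_tau)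
    have "pair_invariant (odd_delta \<tau>) (\<lambda>_ _. 0) (quadratic_count (delta_coord \<tau> a)) (wabc 5 a b c)
        = - (2 * odd_delta \<tau> b * odd_delta \<tau> b * delta_coord \<tau> a a * delta_coord \<tau> a a)"
      unfolding pair_invariant_wabc using ac by (simp add: quadratic_count_def algebra_simps)
    moreover have "(2 * odd_delta \<tau> b * odd_delta \<tau> b * delta_coord \<tau> a a * delta_coord \<tau> a a) b \<noteq> 0"
      using \<open>\<tau> a \<noteq> a\<close> \<open>\<tau> b \<noteq> b\<close> by (simp add: delta_coord_def odd_delta_def)
    ultimately show ?thesis
      by (intro detectable_by_quadratic_count[of a]) (metis neg_equal_0_iff_equal zero_fun_apply)
  qed
qed

lemma detectable_wabc:
  assumes "i \<in> {1..5}" and "regular \<tau> i a b c"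
  shows "detectable \<tau> (wabc i a b c)"
proof -
  have "i = 1 \<or> i = 2 \<or> i = 3 \<or> i = 4 \<or> i = 5"
    using assms(1) by auto
  then show ?thesis
    using assms(2) detectable_wabc1 detectable_wabc2 detectable_wabc3 detectable_wabc4
      detectable_wabc5
    by (auto simp: regular_def)
qed

end

lemma nanoword_wabc: "nanoword (wabc i a b c)"
  by (simp add: nanoword_def wabc_def)

lemma length_wabc: "length (snd (wabc i a b c)) = 6"
  by (simp add: wabc_def)

theorem corollary12p2:
  fixes \<tau> :: "'a \<Rightarrow> 'a" and a b c :: 'a and i :: nat
  assumes "\<And>x. \<tau> (\<tau> x) = x"
    and "i \<in> {1..5}"
    and "regular \<tau> i a b c"
  shows "nw_norm \<tau> (wabc i a b c) = 3"
  using nanoword_wabc length_wabc detectable_wabc[OF assms]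
  by (rule nw_norm_eq_3_if_detectable)

end
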